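(* Let $A=\sum_{j=1}^\infty E_j$, where $E_j$ are rank-one projections and the series converges in the strong operator topology. Let $\lambda=\langle\lambda_j\rangle_{j=1}^\infty$ with $0\le\lambda_j<\frac12$ for all $j$ and $\sum_{j=1}^\infty\lambda_j=\infty$. Let $B=\sum_{k=1}^Ks_kF_k$ with $K\in\mathbb N$, $0\le s_k<1$, and $F_k$ rank-one projections. Then $\langle1-\lambda_j\rangle_{j=1}^\infty\in\operatorname{Adm}(A+B)$.
   Context: $\operatorname{Adm}(X)$ is the set of sequences $\xi\in\ell^\infty_+$ such that $X=\sum_j\xi_jP_j$ for some rank-one projections $P_j$ (series converging in the strong operator topology if infinite). *)

theory Defs
  imports "HOL-Analysis.Analysis"
begin

text \<open>The inner product is conjugate-linear
  in the first and linear in the second argument.\<close>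

class scaleC =
  fixes scaleC :: "complex \<Rightarrow> 'a \<Rightarrow> 'a"  (infixr "*\<^sub>C" 75)

class complex_vector = real_vector + scaleC +
  assumes scaleC_add_right: "a *\<^sub>C (x + y) = a *\<^sub>C x + a *\<^sub>C y"
    and scaleC_add_left: "(a + b) *\<^sub>C x = a *\<^sub>C x + b *\<^sub>C x"
    and scaleC_scaleC: "a *\<^sub>C (b *\<^sub>C x) = (a * b) *\<^sub>C x"
    and scaleC_one: "1 *\<^sub>C x = x"
    and scaleR_scaleC: "r *\<^sub>R x = complex_of_real r *\<^sub>C x"

class complex_inner = complex_vector + real_normed_vector +
  fixes cinner :: "'a \<Rightarrow> 'a \<Rightarrow> complex"
  assumes cinner_commute: "cinner x y = cnj (cinner y x)"
    and cinner_add_right: "cinner x (y + z) = cinner x y + cinner x z"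
    and cinner_scaleC_right: "cinner x (a *\<^sub>C y) = a * cinner x y"
    and norm_eq_sqrt_cinner: "norm x = sqrt (Re (cinner x x))"

class chilbert_space = complex_inner + complete_space

definition rank_one_proj :: "('a::complex_inner \<Rightarrow> 'a) \<Rightarrow> bool" where
  "rank_one_proj P \<longleftrightarrow> (\<exists>e. norm e = 1 \<and> (\<forall>x. P x = cinner e x *\<^sub>C e))"

definition Adm :: "('a::complex_inner \<Rightarrow> 'a) \<Rightarrow> (nat \<Rightarrow> real) set" where
  "Adm X = {\<xi>. bounded (range \<xi>) \<and> (\<forall>j. 0 \<le> \<xi> j) \<and>
     (\<exists>P. (\<forall>j. rank_one_proj (P j)) \<and> (\<forall>x. (\<lambda>j. \<xi> j *\<^sub>R P j x) sums X x))}"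

end

theory Submission
  imports Defs
begin

text \<open>
  Write \<open>A + B = \<Sum>\<^sub>n e\<^sub>n e\<^sub>n\<^sup>* + \<Sum>\<^sub>k w\<^sub>k w\<^sub>k\<^sup>*\<close> with unit vectors \<open>e\<^sub>n\<close> and \<open>\<parallel>w\<^sub>k\<parallel>\<^sup>2 = s\<^sub>k < 1\<close>, and
  produce vectors \<open>z\<^sub>j\<close> with \<open>\<parallel>z\<^sub>j\<parallel>\<^sup>2 = 1 - \<lambda>\<^sub>j\<close> one at a time, keeping a residual vector \<open>y\<close>
  with \<open>\<parallel>y\<parallel> < 1\<close> such that \<open>\<Sum>\<^sub>j\<^sub><\<^sub>N z\<^sub>j z\<^sub>j\<^sup>* + y y\<^sup>*\<close> is the part of \<open>A + B\<close> used up so far.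
  Two moves preserve \<open>y y\<^sup>* + v v\<^sup>*\<close>: cutting a vector into two parallel pieces, and rotating a
  pair \<open>(y, v)\<close> into \<open>(c y + s v, -s y + c v)\<close> with \<open>c\<^sup>2 + s\<^sup>2 = 1\<close>; by continuity the first
  rotated vector can be given any squared norm between \<open>\<parallel>y\<parallel>\<^sup>2\<close> and \<open>\<parallel>v\<parallel>\<^sup>2\<close>.

  First the finitely many \<open>w\<^sub>k\<close> are absorbed into the residual; whenever the residual is too short
  to merge with \<open>w\<^sub>k\<close> it is rotated against a fresh \<open>e\<^sub>n\<close>, which lengthens it by \<open>\<lambda>\<^sub>j\<close>, and this
  must stop because \<open>\<Sum> \<lambda>\<^sub>j = \<infinity>\<close>. Afterwards each step either cuts a long residual or rotates it
  against the next \<open>e\<^sub>n\<close>, so that \<open>y\<^sub>j\<^sub>+\<^sub>1 = \<sigma>\<^sub>j y\<^sub>j + \<gamma>\<^sub>j v\<^sub>j\<close> with \<open>\<sigma>\<^sub>j\<^sup>2 \<le> 1 - \<lambda>\<^sub>j\<close>. Since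
  \<open>\<Prod> (1 - \<lambda>\<^sub>j) = 0\<close> and \<open>\<Sum> |\<langle>e\<^sub>n, x\<rangle>|\<^sup>2 < \<infinity>\<close>, the residual tends to \<open>0\<close> weakly, and the
  series \<open>\<Sum> z\<^sub>j z\<^sub>j\<^sup>*\<close> converges strongly to \<open>A + B\<close>.
\<close>

section \<open>Complex inner product spaces\<close>

lemma cinner_add_left: "cinner (x + y) z = cinner x z + cinner (y::'a::complex_inner) z"
  by (metis cinner_commute cinner_add_right complex_cnj_add)

lemma cinner_scaleC_left: "cinner (a *\<^sub>C x) (y::'a::complex_inner) = cnj a * cinner x y"
  by (metis cinner_commute cinner_scaleC_right complex_cnj_mult)

lemma cinner_scaleR_left: "cinner (r *\<^sub>R x) (y::'a::complex_inner) = of_real r * cinner x y"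
  by (simp add: scaleR_scaleC cinner_scaleC_left)

lemma cinner_scaleR_right: "cinner x (r *\<^sub>R y) = of_real r * cinner (x::'a::complex_inner) y"
  by (simp add: scaleR_scaleC cinner_scaleC_right)

lemma cinner_zero_left [simp]: "cinner 0 (y::'a::complex_inner) = 0"
  using cinner_scaleR_left[of 0 0 y] by simp

lemma cinner_minus_left: "cinner (- x) (y::'a::complex_inner) = - cinner x y"
  using cinner_scaleR_left[of "-1" x y] by simp

lemma cinner_minus_right: "cinner x (- y) = - cinner (x::'a::complex_inner) y"
  using cinner_scaleR_right[of x "-1" y] by simp

lemma cinner_sum_right: "cinner x (\<Sum>i\<in>I. f i) = (\<Sum>i\<in>I. cinner (x::'a::complex_inner) (f i))"
  by (induction I rule: infinite_finite_induct)
    (simp_all add: cinner_add_right cinner_scaleR_right[of x 0, simplified])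

lemma power2_norm_eq_cinner: "(norm x)^2 = Re (cinner x (x::'a::complex_inner))"
proof -
  have "0 \<le> Re (cinner x x)"
    using norm_eq_sqrt_cinner[of x] norm_ge_zero[of x] by (metis real_sqrt_lt_0_iff not_le)
  then show ?thesis
    by (simp add: norm_eq_sqrt_cinner)
qed

lemma norm_add_sq:
  "(norm (x + y))^2 = (norm x)^2 + (norm y)^2 + 2 * Re (cinner x (y::'a::complex_inner))"
proof -
  have "Re (cinner y x) = Re (cinner x y)"
    using cinner_commute[of y x] by simp
  then show ?thesis
    by (simp add: power2_norm_eq_cinner cinner_add_left cinner_add_right)
qed

lemma norm_scaleC: "norm (a *\<^sub>C x) = cmod a * norm (x::'a::complex_inner)"
proof -
  have "(norm (a *\<^sub>C x))^2 = Re ((cnj a * a) * cinner x x)"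
    by (simp only: power2_norm_eq_cinner cinner_scaleC_left cinner_scaleC_right mult.assoc mult.left_commute)
  also have "cnj a * a = of_real ((cmod a)^2)"
    using complex_norm_square[of a] by (simp add: mult.commute)
  finally have "(norm (a *\<^sub>C x))^2 = (cmod a * norm x)^2"
    by (simp add: power_mult_distrib power2_norm_eq_cinner)
  then show ?thesis
    by simp
qed

lemma Re_cinner_polarization:
  "Re (cinner x y) = ((norm (x + y))^2 - (norm (x - y))^2) / 4" for x y :: "'a::complex_inner"
  using norm_add_sq[of x y] norm_add_sq[of x "- y"] by (simp add: cinner_minus_right)

section \<open>Rank-one maps and rotations\<close>

text \<open>The map \<open>x \<mapsto> \<langle>z, x\<rangle> z\<close>, i.e.\ \<open>\<parallel>z\<parallel>\<^sup>2\<close> times the rank-one projection onto the line of \<open>z\<close>.\<close>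

definition selfbutter :: "'a::complex_inner \<Rightarrow> 'a \<Rightarrow> 'a" where
  "selfbutter z x = cinner z x *\<^sub>C z"

lemma rank_one_proj_iff: "rank_one_proj P \<longleftrightarrow> (\<exists>e. norm e = 1 \<and> P = selfbutter e)"
  unfolding rank_one_proj_def selfbutter_def by (auto simp: fun_eq_iff)

lemma selfbutter_scaleR: "selfbutter (r *\<^sub>R z) x = r^2 *\<^sub>R selfbutter z x"
proof -
  have "selfbutter (r *\<^sub>R z) x = (of_real r * cinner z x) *\<^sub>C (of_real r *\<^sub>C z)"
    unfolding selfbutter_def cinner_scaleR_left by (simp only: scaleR_scaleC)
  also have "\<dots> = r^2 *\<^sub>R selfbutter z x"
    by (simp only: selfbutter_def scaleR_scaleC scaleC_scaleC power2_eq_square of_real_mult mult_ac)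
  finally show ?thesis .
qed

lemma selfbutter_uminus [simp]: "selfbutter (- z) = selfbutter z"
  using selfbutter_scaleR[of "-1" z] by (simp add: fun_eq_iff)

lemma selfbutter_zero [simp]: "selfbutter 0 x = 0"
  using selfbutter_scaleR[of 0 0 x] by simp

lemma selfbutter_rotation:
  assumes "c^2 + s^2 = 1"
  shows "selfbutter (c *\<^sub>R u + s *\<^sub>R v) x + selfbutter ((- s) *\<^sub>R u + c *\<^sub>R v) x
    = selfbutter u x + selfbutter v x"
proof -
  define p q where "p = cinner u x" and "q = cinner v x"
  have cs: "(of_real c)^2 + (of_real s)^2 = (1::complex)"
    using arg_cong[OF assms, of complex_of_real] by simp
  have lin: "cinner (a *\<^sub>R u + b *\<^sub>R v) x = of_real a * p + of_real b * q" for a b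
    unfolding p_def q_def by (simp only: cinner_add_left cinner_scaleR_left)
  have "selfbutter (c *\<^sub>R u + s *\<^sub>R v) x + selfbutter ((- s) *\<^sub>R u + c *\<^sub>R v) x
    = ((of_real c * p + of_real s * q) * of_real c + (of_real (- s) * p + of_real c * q) * of_real (- s)) *\<^sub>C u
      + ((of_real c * p + of_real s * q) * of_real s + (of_real (- s) * p + of_real c * q) * of_real c) *\<^sub>C v"
    unfolding selfbutter_def lin
    by (simp only: scaleR_scaleC scaleC_add_right scaleC_scaleC scaleC_add_left add.assoc add.left_commute)
  also have "\<dots> = ((of_real c)^2 + (of_real s)^2) *\<^sub>C (p *\<^sub>C u + q *\<^sub>C v)"
    by (simp add: scaleC_add_right scaleC_scaleC algebra_simps power2_eq_square
        flip: scaleC_add_left)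
  finally show ?thesis
    unfolding cs scaleC_one selfbutter_def p_def q_def .
qed

lemma norm_lincomb_sq:
  "(norm (a *\<^sub>R u + b *\<^sub>R v))^2
    = a^2 * (norm u)^2 + b^2 * (norm v)^2 + 2 * a * b * Re (cinner u (v::'a::complex_inner))"
  by (simp add: norm_add_sq cinner_scaleR_left cinner_scaleR_right power_mult_distrib)

lemma norm_rotation:
  assumes "c^2 + s^2 = 1"
  shows "(norm (c *\<^sub>R u + s *\<^sub>R v))^2 + (norm ((- s) *\<^sub>R u + c *\<^sub>R v))^2
    = (norm u)^2 + (norm (v::'a::complex_inner))^2"
proof -
  have "(norm (c *\<^sub>R u + s *\<^sub>R v))^2 + (norm ((- s) *\<^sub>R u + c *\<^sub>R v))^2
      = (c^2 + s^2) * ((norm u)^2 + (norm v)^2)"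
    unfolding norm_lincomb_sq by (simp add: algebra_simps)
  then show ?thesis
    using assms by simp
qed

lemma Re_cinner_selfbutter: "Re (cinner x (selfbutter e x)) = (cmod (cinner e (x::'a::complex_inner)))^2"
proof -
  have "cinner x (selfbutter e x) = cinner e x * cnj (cinner e x)"
    using cinner_commute[of x e] by (simp add: selfbutter_def cinner_scaleC_right)
  also have "\<dots> = of_real ((cmod (cinner e x))^2)"
    using complex_norm_square[of "cinner e x"] by simp
  finally show ?thesis
    by simp
qed

lemma norm_selfbutter_le:
  "norm y \<le> 1 \<Longrightarrow> norm (selfbutter y x) \<le> cmod (cinner y (x::'a::complex_inner))"
  unfolding selfbutter_def norm_scaleC by (rule mult_left_le) simp_all

lemma selfbutter_split:
  assumes "0 \<le> q" "q \<le> 1"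
  shows "selfbutter (sqrt q *\<^sub>R y) x + selfbutter (sqrt (1 - q) *\<^sub>R y) x = selfbutter y x"
  using assms by (simp add: selfbutter_scaleR flip: scaleR_left_distrib)

lemma rotation_merge:
  fixes y w :: "'a::complex_inner"
  assumes "min ((norm y)^2) ((norm w)^2) \<le> t" "t \<le> max ((norm y)^2) ((norm w)^2)"
  shows "\<exists>z y'. (norm z)^2 = t \<and> (norm y')^2 \<le> max ((norm y)^2) ((norm w)^2) \<and>
    (\<forall>x. selfbutter z x + selfbutter y' x = selfbutter y x + selfbutter w x)"
proof -
  define f where "f c = (norm (c *\<^sub>R y + sqrt (1 - c^2) *\<^sub>R w))^2" for c
  have "continuous_on {0..1} f"
    unfolding f_def by (intro continuous_intros)
  moreover have "f 0 = (norm w)^2" "f 1 = (norm y)^2"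
    by (simp_all add: f_def)
  ultimately obtain c where c: "0 \<le> c" "c \<le> 1" "f c = t"
    using IVT'[of f 0 t 1] IVT2'[of f 1 t 0] assms
    by (cases "(norm y)^2 \<le> (norm w)^2") (auto simp: min_def max_def)
  define s where "s = sqrt (1 - c^2)"
  have cs: "c^2 + s^2 = 1"
    using c by (simp add: s_def power_le_one)
  have "(norm (c *\<^sub>R y + s *\<^sub>R w))^2 = t"
    using c(3) by (simp add: f_def s_def)
  moreover have "(norm ((- s) *\<^sub>R y + c *\<^sub>R w))^2 \<le> max ((norm y)^2) ((norm w)^2)"
    using norm_rotation[OF cs, of y w] calculation assms by (smt (verit) min_def max_def)
  ultimately show ?thesis
    using selfbutter_rotation[OF cs, of y w] by blast
qed

lemma rotation_main_step:
  fixes y e :: "'a::complex_inner"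
  assumes y: "(norm y)^2 < 1 - l" and e: "norm e = 1" and l: "0 \<le> l"
  shows "\<exists>z y' \<sigma> \<gamma> v. (norm z)^2 = 1 - l \<and> (norm y')^2 = (norm y)^2 + l \<and>
    (\<forall>x. selfbutter z x + selfbutter y' x = selfbutter y x + selfbutter e x) \<and>
    y' = \<sigma> *\<^sub>R y + \<gamma> *\<^sub>R v \<and> \<sigma>^2 + \<gamma>^2 = 1 \<and> \<sigma>^2 \<le> 1 - l \<and> (v = e \<or> v = - e)"
proof -
  define v where "v = (if 0 \<le> Re (cinner y e) then e else - e)"
  have v: "norm v = 1" "0 \<le> Re (cinner y v)" "v = e \<or> v = - e"
    using e by (auto simp: v_def cinner_minus_right)
  define f where "f c = (norm (c *\<^sub>R y + sqrt (1 - c^2) *\<^sub>R v))^2" for c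
  have l1: "l < 1"
    using y by (smt (verit) zero_le_power2)
  \<comment> \<open>At \<open>c = \<surd>l\<close> the component along \<open>v\<close> alone has squared norm \<open>1 - l\<close>, and the cross term is nonnegative.\<close>
  have "f (sqrt l) = l * (norm y)^2 + (1 - l) + 2 * sqrt l * sqrt (1 - l) * Re (cinner y v)"
    using l l1 v(1) by (simp add: f_def norm_lincomb_sq)
  then have "1 - l \<le> f (sqrt l)"
    using l l1 v(2) by (smt (verit) mult_nonneg_nonneg real_sqrt_ge_zero zero_le_power2)
  moreover have "f 1 \<le> 1 - l"
    using y by (simp add: f_def)
  moreover have "continuous_on {sqrt l..1} f"
    unfolding f_def by (intro continuous_intros)
  ultimately obtain c where c: "sqrt l \<le> c" "c \<le> 1" "f c = 1 - l"
    using IVT2'[of f 1 "1 - l" "sqrt l"] l l1 by auto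
  define s where "s = sqrt (1 - c^2)"
  have c0: "0 \<le> c"
    using c(1) real_sqrt_ge_zero[OF l] by linarith
  have cs: "c^2 + s^2 = 1"
    using c c0 by (simp add: s_def power_le_one)
  have "l \<le> c^2"
    using c(1) l by (metis power_mono real_sqrt_ge_zero real_sqrt_pow2)
  then have "(- s)^2 + c^2 = 1" "(- s)^2 \<le> 1 - l"
    using cs by simp_all
  moreover have "(norm (c *\<^sub>R y + s *\<^sub>R v))^2 = 1 - l"
    using c(3) by (simp add: f_def s_def)
  moreover have "(norm ((- s) *\<^sub>R y + c *\<^sub>R v))^2 = (norm y)^2 + l"
    using norm_rotation[OF cs, of y v] calculation(3) v(1) by simp
  moreover have "selfbutter v = selfbutter e"
    using v(3) by auto
  ultimately show ?thesis
    using selfbutter_rotation[OF cs, of y v] v(3) by metis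
qed

section \<open>Partial decompositions\<close>

definition partial_decomp ::
    "(nat \<Rightarrow> real) \<Rightarrow> (nat \<Rightarrow> 'a::complex_inner) \<Rightarrow> nat \<Rightarrow> nat \<Rightarrow> (nat \<Rightarrow> 'a) \<Rightarrow> ('a \<Rightarrow> 'a) \<Rightarrow> ('a \<Rightarrow> 'a) \<Rightarrow> bool" where
  "partial_decomp lam e n m z R R' \<longleftrightarrow>
    (\<forall>j<n. (norm (z j))^2 = 1 - lam j) \<and>
    (\<forall>x. (\<Sum>j<n. selfbutter (z j) x) + R' x = R x + (\<Sum>i<m. selfbutter (e i) x))"

lemma sum_lessThan_add:
  "sum f {..<n + m} = sum f {..<n} + (\<Sum>i<m. f (i + n))" for f :: "nat \<Rightarrow> 'a::comm_monoid_add"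
  by (induction m) (simp_all add: add_ac)

lemma partial_decomp_append:
  assumes "partial_decomp lam e n m z R R'"
    and "partial_decomp (\<lambda>j. lam (j + n)) (\<lambda>i. e (i + m)) n' m' z' R' R''"
  shows "partial_decomp lam e (n + n') (m + m') (\<lambda>j. if j < n then z j else z' (j - n)) R R''"
  unfolding partial_decomp_def
proof (intro conjI allI impI)
  let ?z = "\<lambda>j. if j < n then z j else z' (j - n)"
  fix x
  have "(\<Sum>j<n. selfbutter (?z j) x) = (\<Sum>j<n. selfbutter (z j) x)"
    by (rule sum.cong) simp_all
  then have "(\<Sum>j<n + n'. selfbutter (?z j) x) + R'' x
      = (\<Sum>j<n. selfbutter (z j) x) + ((\<Sum>j<n'. selfbutter (z' j) x) + R'' x)"
    by (simp add: sum_lessThan_add add_ac)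
  also have "\<dots> = ((\<Sum>j<n. selfbutter (z j) x) + R' x) + (\<Sum>i<m'. selfbutter (e (i + m)) x)"
    using assms(2) by (simp add: partial_decomp_def add_ac)
  also have "\<dots> = R x + (\<Sum>i<m + m'. selfbutter (e i) x)"
    using assms(1) by (simp add: partial_decomp_def sum_lessThan_add add_ac)
  finally show "(\<Sum>j<n + n'. selfbutter (?z j) x) + R'' x = R x + (\<Sum>i<m + m'. selfbutter (e i) x)" .
next
  fix j assume "j < n + n'"
  then show "(norm (if j < n then z j else z' (j - n)))^2 = 1 - lam j"
    using assms unfolding partial_decomp_def by (cases "j < n") auto
qed

lemma partial_decomp_add:
  "partial_decomp lam e n m z R R' \<Longrightarrow> partial_decomp lam e n m z (\<lambda>x. R x + S x) (\<lambda>x. R' x + S x)"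
  unfolding partial_decomp_def by (simp add: algebra_simps)

lemma partial_decomp_single:
  "(norm z)^2 = 1 - lam 0 \<Longrightarrow> (\<And>x. selfbutter z x + R' x = R x + (\<Sum>i<m. selfbutter (e i) x))
    \<Longrightarrow> partial_decomp lam e 1 m (\<lambda>_. z) R R'"
  unfolding partial_decomp_def by simp

lemma filterlim_sum_at_top_not_summable:
  fixes f :: "nat \<Rightarrow> real"
  assumes "\<And>n. 0 \<le> f n" and "\<not> summable f"
  shows "filterlim (\<lambda>n. \<Sum>i<n. f i) at_top sequentially"
  unfolding filterlim_at_top eventually_sequentially
proof
  fix B
  have "\<not> (\<forall>n. (\<Sum>i\<le>n. f i) \<le> B)"
    using bounded_imp_summable[of f B] assms by blast
  then obtain n where n: "B < (\<Sum>i\<le>n. f i)"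
    by (auto simp: not_le)
  have "B \<le> (\<Sum>i<d. f i)" if "Suc n \<le> d" for d
    using n sum_mono2[of "{..<d}" "{..n}" f] assms that by fastforce
  then show "\<exists>N. \<forall>d\<ge>N. B \<le> (\<Sum>i<d. f i)"
    by blast
qed

lemma main_step:
  assumes "(norm y)^2 < 1 - lam 0" and "norm (e 0) = 1" and "0 \<le> lam 0"
  shows "\<exists>z y'. partial_decomp lam e 1 1 z (selfbutter y) (selfbutter y') \<and> (norm y')^2 = (norm y)^2 + lam 0"
proof -
  obtain z y' where "(norm z)^2 = 1 - lam 0" "(norm y')^2 = (norm y)^2 + lam 0"
      "\<And>x. selfbutter z x + selfbutter y' x = selfbutter y x + selfbutter (e 0) x"
    using rotation_main_step[OF assms] by metis
  then show ?thesis
    by (intro exI[of _ "\<lambda>_. z"] exI[of _ y'] conjI partial_decomp_single) simp_all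
qed

lemma merge_step:
  assumes "min ((norm y)^2) ((norm w)^2) \<le> 1 - lam 0" and "1 - lam 0 \<le> max ((norm y)^2) ((norm w)^2)"
  shows "\<exists>z y'. partial_decomp lam e 1 0 z (\<lambda>x. selfbutter y x + selfbutter w x) (selfbutter y')
    \<and> (norm y')^2 \<le> max ((norm y)^2) ((norm w)^2)"
proof -
  obtain z y' where "(norm z)^2 = 1 - lam 0" "(norm y')^2 \<le> max ((norm y)^2) ((norm w)^2)"
      "\<And>x. selfbutter z x + selfbutter y' x = selfbutter y x + selfbutter w x"
    using rotation_merge[OF assms] by metis
  then show ?thesis
    by (intro exI[of _ "\<lambda>_. z"] exI[of _ y'] conjI partial_decomp_single) simp_all
qed

lemma split_step:
  assumes "0 < 1 - lam 0" and "1 - lam 0 \<le> (norm w)^2"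
  shows "\<exists>z w'. partial_decomp lam e 1 0 z (\<lambda>x. selfbutter y x + selfbutter w x) (\<lambda>x. selfbutter y x + selfbutter w' x)
    \<and> (norm w')^2 = (norm w)^2 - (1 - lam 0)"
proof -
  define q where "q = (1 - lam 0) / (norm w)^2"
  have w: "0 < (norm w)^2"
    using assms by linarith
  then have q: "0 \<le> q" "q \<le> 1"
    using assms by (simp_all add: q_def)
  have "(norm (sqrt q *\<^sub>R w))^2 = 1 - lam 0" "(norm (sqrt (1 - q) *\<^sub>R w))^2 = (norm w)^2 - (1 - lam 0)"
    using q w by (simp_all add: q_def field_simps)
  moreover have "selfbutter (sqrt q *\<^sub>R w) x + (selfbutter y x + selfbutter (sqrt (1 - q) *\<^sub>R w) x)
      = selfbutter y x + selfbutter w x" for x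
    using selfbutter_split[OF q, of w x] by (simp add: add_ac)
  ultimately show ?thesis
    by (intro exI[of _ "\<lambda>_. sqrt q *\<^sub>R w"] exI[of _ "sqrt (1 - q) *\<^sub>R w"] conjI partial_decomp_single) simp_all
qed

lemma grow_residual:
  assumes e: "\<And>i. norm (e i) = 1" and lam: "\<And>j. 0 \<le> lam j"
  shows "(norm y)^2 + (\<Sum>j<n. lam j) < 1 \<Longrightarrow> \<exists>z y'. partial_decomp lam e n n z (selfbutter y) (selfbutter y')
    \<and> (norm y')^2 = (norm y)^2 + (\<Sum>j<n. lam j)"
proof (induction n)
  case 0
  show ?case
    by (intro exI[of _ y] exI) (simp add: partial_decomp_def)
next
  case (Suc n)
  then obtain z y1 where z: "partial_decomp lam e n n z (selfbutter y) (selfbutter y1)"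
      and y1: "(norm y1)^2 = (norm y)^2 + (\<Sum>j<n. lam j)"
    using lam[of n] by auto
  have "(norm y1)^2 < 1 - lam n"
    using Suc.prems y1 by simp
  then obtain z1 y2 where "partial_decomp (\<lambda>j. lam (j + n)) (\<lambda>i. e (i + n)) 1 1 z1 (selfbutter y1) (selfbutter y2)"
      and y2: "(norm y2)^2 = (norm y1)^2 + lam n"
    using main_step[where lam = "\<lambda>j. lam (j + n)" and e = "\<lambda>i. e (i + n)" and y = y1] e lam by auto
  from partial_decomp_append[OF z this(1)] show ?case
    using y1 y2 by (auto simp: add.assoc)
qed

lemma grow_until_mergeable:
  assumes e: "\<And>i. norm (e i) = 1" and lam: "\<And>j. 0 \<le> lam j" "\<not> summable lam"
    and y: "(norm y)^2 < 1"
  shows "\<exists>n z y'. partial_decomp lam e n n z (selfbutter y) (selfbutter y') \<and> (norm y')^2 < 1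
    \<and> 1 - lam n \<le> max ((norm y')^2) b"
proof -
  define a where "a n = (norm y)^2 + (\<Sum>j<n. lam j)" for n
  have "\<forall>\<^sub>F n in sequentially. 1 \<le> (\<Sum>j<n. lam j)"
    using filterlim_sum_at_top_not_summable[OF lam] by (simp add: filterlim_at_top)
  then obtain N where "1 \<le> (\<Sum>j<N. lam j)"
    unfolding eventually_sequentially by blast
  then have "1 - lam N \<le> max (a N) b"
    using lam(1)[of N] zero_le_power2[of "norm y"] unfolding a_def by linarith
  then have "\<exists>n. 1 - lam n \<le> max (a n) b" ..
  define n where "n = (LEAST n. 1 - lam n \<le> max (a n) b)"
  have n: "1 - lam n \<le> max (a n) b"
    unfolding n_def by (rule LeastI_ex) fact
  have "a n < 1"
  proof (cases n)
    case 0
    then show ?thesis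
      using y by (simp add: a_def)
  next
    case (Suc k)
    then have "\<not> 1 - lam k \<le> max (a k) b"
      unfolding n_def by (metis lessI not_less_Least)
    then show ?thesis
      using Suc by (simp add: a_def)
  qed
  then obtain z y' where "partial_decomp lam e n n z (selfbutter y) (selfbutter y')" "(norm y')^2 = a n"
    using grow_residual[where e = e and lam = lam and y = y and n = n, OF e lam(1)] unfolding a_def by blast
  then show ?thesis
    using \<open>a n < 1\<close> n by metis
qed

lemma absorb_small_vector:
  assumes e: "\<And>i. norm (e i) = 1" and lam: "\<And>j. 0 \<le> lam j \<and> lam j < 1/2" "\<not> summable lam"
    and y: "(norm y)^2 < 1" and w: "(norm w)^2 \<le> 1/2"
  shows "\<exists>n m z y'. partial_decomp lam e n m z (\<lambda>x. selfbutter y x + selfbutter w x) (selfbutter y')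
    \<and> (norm y')^2 < 1"
proof -
  obtain n z y1 where grow: "partial_decomp lam e n n z (selfbutter y) (selfbutter y1)"
      and y1: "(norm y1)^2 < 1" and n: "1 - lam n \<le> max ((norm y1)^2) ((norm w)^2)"
    using grow_until_mergeable[where e = e and lam = lam and b = "(norm w)^2", OF e _ lam(2) y] lam(1) by blast
  have "min ((norm y1)^2) ((norm w)^2) \<le> 1 - lam n"
    using w lam(1)[of n] by linarith
  then obtain z1 y2 where "partial_decomp (\<lambda>j. lam (j + n)) (\<lambda>i. e (i + n)) 1 0 z1
      (\<lambda>x. selfbutter y1 x + selfbutter w x) (selfbutter y2)"
      and "(norm y2)^2 \<le> max ((norm y1)^2) ((norm w)^2)"
    using merge_step[where lam = "\<lambda>j. lam (j + n)" and e = "\<lambda>i. e (i + n)" and y = y1 and w = w] n by auto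
  with partial_decomp_append[OF partial_decomp_add[OF grow]] show ?thesis
    using y1 w by fastforce
qed

lemma absorb_vector:
  assumes e: "\<And>i. norm (e i) = 1" and lam: "\<And>j. 0 \<le> lam j \<and> lam j < 1/2" "\<not> summable lam"
    and y: "(norm y)^2 < 1" and w: "(norm w)^2 < 1"
  shows "\<exists>n m z y'. partial_decomp lam e n m z (\<lambda>x. selfbutter y x + selfbutter w x) (selfbutter y')
    \<and> (norm y')^2 < 1"
proof -
  obtain n z y1 where grow: "partial_decomp lam e n n z (selfbutter y) (selfbutter y1)"
      and y1: "(norm y1)^2 < 1" and n: "1 - lam n \<le> max ((norm y1)^2) ((norm w)^2)"
    using grow_until_mergeable[where e = e and lam = lam and b = "(norm w)^2", OF e _ lam(2) y] lam(1)
    by blast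
  note grow' = partial_decomp_add[OF grow, of "selfbutter w"]
  show ?thesis
  proof (cases "min ((norm y1)^2) ((norm w)^2) \<le> 1 - lam n")
    case True
    then obtain z1 y2 where "partial_decomp (\<lambda>j. lam (j + n)) (\<lambda>i. e (i + n)) 1 0 z1
        (\<lambda>x. selfbutter y1 x + selfbutter w x) (selfbutter y2)"
        and "(norm y2)^2 \<le> max ((norm y1)^2) ((norm w)^2)"
      using merge_step[where lam = "\<lambda>j. lam (j + n)" and e = "\<lambda>i. e (i + n)" and y = y1 and w = w] n by auto
    with partial_decomp_append[OF grow'] show ?thesis
      using y1 w by fastforce
  next
    case False
    \<comment> \<open>Then \<open>w\<close> is too long: split off a piece of the required length; the rest is shorter than \<open>1/2\<close>.\<close>
    then have "0 < 1 - lam n" "1 - lam n \<le> (norm w)^2"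
      using lam(1)[of n] by auto
    then obtain z1 w' where split: "partial_decomp (\<lambda>j. lam (j + n)) (\<lambda>i. e (i + n)) 1 0 z1
        (\<lambda>x. selfbutter y1 x + selfbutter w x) (\<lambda>x. selfbutter y1 x + selfbutter w' x)"
        and "(norm w')^2 = (norm w)^2 - (1 - lam n)"
      using split_step[where lam = "\<lambda>j. lam (j + n)" and e = "\<lambda>i. e (i + n)" and y = y1 and w = w] by auto
    then have w': "(norm w')^2 \<le> 1/2"
      using w lam(1)[of n] by linarith
    have "\<not> summable (\<lambda>j. lam (j + (n + 1)))"
      unfolding summable_iff_shift by (rule lam(2))
    then obtain n' m' z' y' where
        rest: "partial_decomp (\<lambda>j. lam (j + (n + 1))) (\<lambda>i. e (i + (n + 0))) n' m' z'
          (\<lambda>x. selfbutter y1 x + selfbutter w' x) (selfbutter y')"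
        and y': "(norm y')^2 < 1"
      using absorb_small_vector[where e = "\<lambda>i. e (i + (n + 0))" and lam = "\<lambda>j. lam (j + (n + 1))",
          OF e lam(1) _ y1 w'] by blast
    from partial_decomp_append[OF partial_decomp_append[OF grow' split] rest] y' show ?thesis
      by blast
  qed
qed

lemma absorb_finite_sum:
  assumes "finite I"
  shows "(\<And>k. k \<in> I \<Longrightarrow> (norm (w k))^2 < 1) \<Longrightarrow> (\<And>i. norm (e i) = 1) \<Longrightarrow>
    (\<And>j. 0 \<le> lam j \<and> lam j < 1/2) \<Longrightarrow> \<not> summable lam \<Longrightarrow> (norm y)^2 < 1 \<Longrightarrow>
    \<exists>n m z y'. partial_decomp lam e n m z (\<lambda>x. selfbutter y x + (\<Sum>k\<in>I. selfbutter (w k) x)) (selfbutter y')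
      \<and> (norm y')^2 < 1"
  using assms
proof (induction I arbitrary: y lam e rule: finite_induct)
  case empty
  have "partial_decomp lam e 0 0 z (\<lambda>x. selfbutter y x + (\<Sum>k\<in>{}. selfbutter (w k) x)) (selfbutter y)" for z
    by (simp add: partial_decomp_def)
  then show ?case
    using empty.prems(5) by blast
next
  case (insert k I)
  have wk: "(norm (w k))^2 < 1"
    using insert.prems(1) by blast
  obtain n m z y1 where first: "partial_decomp lam e n m z (\<lambda>x. selfbutter y x + selfbutter (w k) x)
      (selfbutter y1)" and y1: "(norm y1)^2 < 1"
    using absorb_vector[where e = e and lam = lam and y = y and w = "w k", OF insert.prems(2-5) wk]
    by blast
  have wI: "\<And>k'. k' \<in> I \<Longrightarrow> (norm (w k'))^2 < 1"
    using insert.prems(1) by blast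
  have eI: "\<And>i. norm (e (i + m)) = 1" and lamI: "\<And>j. 0 \<le> lam (j + n) \<and> lam (j + n) < 1/2"
    using insert.prems(2,3) by simp_all
  have "\<not> summable (\<lambda>j. lam (j + n))"
    using insert.prems(4) summable_iff_shift[where f = lam and k = n] by simp
  then obtain n' m' z' y' where rest: "partial_decomp (\<lambda>j. lam (j + n)) (\<lambda>i. e (i + m)) n' m' z'
      (\<lambda>x. selfbutter y1 x + (\<Sum>k\<in>I. selfbutter (w k) x)) (selfbutter y')" and y': "(norm y')^2 < 1"
    using insert.IH[where y = y1 and lam = "\<lambda>j. lam (j + n)" and e = "\<lambda>i. e (i + m)", OF wI eI lamI _ y1]
    by blast
  have "(\<lambda>x. selfbutter y x + (\<Sum>k\<in>insert k I. selfbutter (w k) x))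
      = (\<lambda>x. (selfbutter y x + selfbutter (w k) x) + (\<Sum>k\<in>I. selfbutter (w k) x))"
    using insert.hyps by (simp add: add_ac)
  moreover obtain Z where "partial_decomp lam e (n + n') (m + m') Z
      (\<lambda>x. (selfbutter y x + selfbutter (w k) x) + (\<Sum>k\<in>I. selfbutter (w k) x)) (selfbutter y')"
    using partial_decomp_append[OF partial_decomp_add[OF first] rest] by blast
  ultimately show ?case
    using y' by (metis (no_types))
qed

section \<open>Damped linear recursions\<close>

lemma cmod_lincomb_sq_le:
  "(cmod (of_real s * p + of_real g * q))^2 \<le> (s^2 + g^2) * ((cmod p)^2 + (cmod q)^2)"
proof -
  have "cmod (of_real s * p + of_real g * q) \<le> \<bar>s\<bar> * cmod p + \<bar>g\<bar> * cmod q"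
    using norm_triangle_ineq[of "of_real s * p" "of_real g * q"] by (simp add: norm_mult)
  then have "(cmod (of_real s * p + of_real g * q))^2 \<le> (\<bar>s\<bar> * cmod p + \<bar>g\<bar> * cmod q)^2"
    by (rule power_mono) simp
  also have "\<dots> \<le> (s^2 + g^2) * ((cmod p)^2 + (cmod q)^2)"
  proof -
    have "(s^2 + g^2) * ((cmod p)^2 + (cmod q)^2) - (\<bar>s\<bar> * cmod p + \<bar>g\<bar> * cmod q)^2
        = (\<bar>s\<bar> * cmod q - \<bar>g\<bar> * cmod p)^2"
      by (simp add: power2_eq_square algebra_simps)
    then show ?thesis
      by (smt (verit) zero_le_power2)
  qed
  finally show ?thesis .
qed

lemma lincomb_recursion_perturbation:
  fixes \<alpha> \<beta> :: "nat \<Rightarrow> complex" and \<sigma> \<gamma> :: "nat \<Rightarrow> real"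
  assumes rec: "\<And>j. \<alpha> (Suc j) = of_real (\<sigma> j) * \<alpha> j + of_real (\<gamma> j) * \<beta> j"
    and bound: "\<And>j. (\<sigma> j)^2 + (\<gamma> j)^2 \<le> 1" and \<beta>: "summable (\<lambda>j. (cmod (\<beta> j))^2)"
  shows "(cmod (\<alpha> d - of_real (\<Prod>i<d. \<sigma> i) * \<alpha> 0))^2 \<le> (\<Sum>i. (cmod (\<beta> i))^2)"
proof -
  have "(cmod (\<alpha> d - of_real (\<Prod>i<d. \<sigma> i) * \<alpha> 0))^2 \<le> (\<Sum>i<d. (cmod (\<beta> i))^2)"
  proof (induction d)
    case (Suc d)
    define p where "p = \<alpha> d - of_real (\<Prod>i<d. \<sigma> i) * \<alpha> 0"
    have "\<alpha> (Suc d) - of_real (\<Prod>i<Suc d. \<sigma> i) * \<alpha> 0 = of_real (\<sigma> d) * p + of_real (\<gamma> d) * \<beta> d"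
      by (simp add: rec p_def algebra_simps)
    then have "(cmod (\<alpha> (Suc d) - of_real (\<Prod>i<Suc d. \<sigma> i) * \<alpha> 0))^2
        \<le> ((\<sigma> d)^2 + (\<gamma> d)^2) * ((cmod p)^2 + (cmod (\<beta> d))^2)"
      by (simp only: cmod_lincomb_sq_le)
    also have "\<dots> \<le> (cmod p)^2 + (cmod (\<beta> d))^2"
      using bound[of d] by (simp add: mult_left_le_one_le)
    also have "\<dots> \<le> (\<Sum>i<Suc d. (cmod (\<beta> i))^2)"
      using Suc.IH by (simp add: p_def)
    finally show ?case .
  qed simp
  also have "\<dots> \<le> (\<Sum>i. (cmod (\<beta> i))^2)"
    using \<beta> by (intro sum_le_suminf) simp_all
  finally show ?thesis .
qed

lemma prod_tendsto_zero_divergent: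
  fixes \<sigma> lam :: "nat \<Rightarrow> real"
  assumes \<sigma>: "\<And>i. (\<sigma> i)^2 \<le> 1 - lam i" and lam: "\<And>i. 0 \<le> lam i" "\<not> summable lam"
  shows "(\<lambda>d. \<Prod>i<d. \<sigma> i) \<longlonglongrightarrow> 0"
proof -
  have bound: "(\<Prod>i<d. \<sigma> i)^2 \<le> exp (- (\<Sum>i<d. lam i))" for d
  proof -
    have "(\<Prod>i<d. \<sigma> i)^2 = (\<Prod>i<d. (\<sigma> i)^2)"
      by (rule prod_power_distrib)
    also have "\<dots> \<le> (\<Prod>i<d. exp (- lam i))"
      using \<sigma> exp_ge_add_one_self by (intro prod_mono) (smt (verit) zero_le_power2)
    also have "\<dots> = exp (- (\<Sum>i<d. lam i))"
      by (simp add: exp_sum sum_negf[symmetric])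
    finally show ?thesis .
  qed
  have "(\<lambda>d. exp (- (\<Sum>i<d. lam i))) \<longlonglongrightarrow> 0"
    by (intro filterlim_compose[OF exp_at_bot] filterlim_compose[OF filterlim_uminus_at_bot_at_top]
        filterlim_sum_at_top_not_summable lam)
  then have "(\<lambda>d. (\<Prod>i<d. \<sigma> i)^2) \<longlonglongrightarrow> 0"
    by (rule Lim_null_comparison[rotated]) (simp add: bound)
  then show ?thesis
    by simp
qed

lemma lincomb_recursion_tendsto_zero:
  fixes \<alpha> \<beta> :: "nat \<Rightarrow> complex" and \<sigma> \<gamma> lam :: "nat \<Rightarrow> real"
  assumes rec: "\<And>j. \<alpha> (Suc j) = of_real (\<sigma> j) * \<alpha> j + of_real (\<gamma> j) * \<beta> j"
    and bound: "\<And>j. (\<sigma> j)^2 + (\<gamma> j)^2 \<le> 1" "\<And>j. (\<sigma> j)^2 \<le> 1 - lam j"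
    and \<beta>: "summable (\<lambda>j. (cmod (\<beta> j))^2)"
    and lam: "\<And>j. 0 \<le> lam j" "\<not> summable lam"
  shows "\<alpha> \<longlonglongrightarrow> 0"
proof (rule LIMSEQ_I)
  fix r :: real
  assume r: "0 < r"
  obtain k where "norm (\<Sum>i. (cmod (\<beta> (i + k)))^2) < (r/2)^2"
    using suminf_exist_split[OF _ \<beta>, of "(r/2)^2"] r by auto
  then have tail: "(\<Sum>i. (cmod (\<beta> (i + k)))^2) < (r/2)^2"
    by (simp add: abs_less_iff)
  define \<pi> where "\<pi> d = (\<Prod>i<d. \<sigma> (i + k))" for d
  \<comment> \<open>From time \<open>k\<close> on, \<open>\<alpha>\<close> is the decaying free evolution \<open>\<pi> d * \<alpha> k\<close> plus a perturbation fed by the tail of \<open>\<beta>\<close>.\<close>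
  have "(cmod (\<alpha> (d + k) - of_real (\<pi> d) * \<alpha> k))^2 < (r/2)^2" for d
    using lincomb_recursion_perturbation[where \<alpha> = "\<lambda>j. \<alpha> (j + k)" and \<beta> = "\<lambda>j. \<beta> (j + k)"
        and \<sigma> = "\<lambda>j. \<sigma> (j + k)" and \<gamma> = "\<lambda>j. \<gamma> (j + k)" and d = d] rec bound(1) tail
      \<beta> summable_iff_shift[where f = "\<lambda>j. (cmod (\<beta> j))^2" and k = k]
    by (simp add: \<pi>_def)
  then have near: "cmod (\<alpha> (d + k) - of_real (\<pi> d) * \<alpha> k) < r/2" for d
    by (rule power2_less_imp_less) (use r in simp)
  have "\<not> summable (\<lambda>i. lam (i + k))"
    using lam(2) summable_iff_shift[where f = lam and k = k] by simp
  then have "\<pi> \<longlonglongrightarrow> 0"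
    unfolding \<pi>_def using prod_tendsto_zero_divergent[where \<sigma> = "\<lambda>i. \<sigma> (i + k)" and lam = "\<lambda>i. lam (i + k)"] bound(2) lam(1)
    by blast
  then have "(\<lambda>d. of_real (\<pi> d) * \<alpha> k) \<longlonglongrightarrow> 0"
    using tendsto_mult_left_zero tendsto_of_real by fastforce
  then obtain D where D: "\<And>d. D \<le> d \<Longrightarrow> cmod (of_real (\<pi> d) * \<alpha> k) < r/2"
    using LIMSEQ_D[of _ 0 "r/2"] r by (metis diff_zero half_gt_zero)
  show "\<exists>no. \<forall>n\<ge>no. norm (\<alpha> n - 0) < r"
  proof (intro exI allI impI)
    fix n assume "D + k \<le> n"
    then have "cmod (\<alpha> n) \<le> cmod (\<alpha> ((n - k) + k) - of_real (\<pi> (n - k)) * \<alpha> k) + cmod (of_real (\<pi> (n - k)) * \<alpha> k)"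
      using norm_triangle_ineq[of "\<alpha> n - of_real (\<pi> (n - k)) * \<alpha> k" "of_real (\<pi> (n - k)) * \<alpha> k"]
      by simp
    also have "\<dots> < r"
      using near[of "n - k"] D[of "n - k"] \<open>D + k \<le> n\<close> by (simp add: le_diff_conv2)
    finally show "norm (\<alpha> n - 0) < r"
      by simp
  qed
qed

section \<open>The infinite phase\<close>

lemma summable_along_counter:
  fixes g :: "nat \<Rightarrow> real" and M :: "nat \<Rightarrow> nat"
  assumes g: "summable g" "\<And>n. 0 \<le> g n" and M: "\<And>j. M (Suc j) = M j \<or> M (Suc j) = Suc (M j)"
  shows "summable (\<lambda>j. if M (Suc j) = Suc (M j) then g (M j) else 0)"
proof (rule bounded_imp_summable)
  let ?h = "\<lambda>j. if M (Suc j) = Suc (M j) then g (M j) else 0"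
  have partial: "(\<Sum>j<N. ?h j) + (\<Sum>n<M 0. g n) = (\<Sum>n<M N. g n)" for N
  proof (induction N)
    case (Suc N)
    then show ?case
      using M[of N] by (auto simp: add_ac)
  qed simp
  show "(\<Sum>j\<le>N. ?h j) \<le> suminf g" for N
  proof -
    have "(\<Sum>j\<le>N. ?h j) \<le> (\<Sum>n<M (Suc N). g n)"
      using partial[of "Suc N"] sum_nonneg[of "{..<M 0}" g] g(2) by (simp add: lessThan_Suc_atMost)
    also have "\<dots> \<le> suminf g"
      using g by (intro sum_le_suminf) simp_all
    finally show ?thesis .
  qed
qed (use g in simp)

lemma filterlim_counter_at_top:
  fixes M :: "nat \<Rightarrow> nat"
  assumes step: "\<And>j. M (Suc j) = M j \<or> M (Suc j) = Suc (M j)"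
    and no_stall_twice: "\<And>j. M (Suc j) = M j \<Longrightarrow> M (Suc (Suc j)) = Suc (M (Suc j))"
  shows "filterlim M at_top sequentially"
proof -
  have mono: "mono M"
    unfolding mono_iff_le_Suc using step by (metis le_SucI order.refl)
  have two_steps: "Suc (M j) \<le> M (j + 2)" for j
    using step[of j] step[of "Suc j"] no_stall_twice[of j] by auto
  have linear: "n \<le> M (2 * n)" for n
  proof (induction n)
    case (Suc n)
    then show ?case
      using two_steps[of "2 * n"] by simp
  qed simp
  show ?thesis
    unfolding filterlim_at_top eventually_sequentially
  proof (intro allI exI impI)
    fix N j :: nat
    assume "2 * N \<le> j"
    then show "N \<le> M j"
      using linear[of N] monoD[OF mono] by (meson order.trans)
  qed
qed

lemma summable_cmod_cinner_sq:
  assumes "(\<lambda>n. selfbutter (e n) x) sums (y::'a::complex_inner)"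
  shows "summable (\<lambda>n. (cmod (cinner (e n) x))^2)"
proof -
  \<comment> \<open>The polarization identity makes \<open>Re \<langle>x, -\<rangle>\<close> continuous in terms of norms only.\<close>
  define h where "h v = ((norm (x + v))^2 - (norm (x - v))^2) / 4" for v :: 'a
  have "(\<lambda>N. h (\<Sum>n<N. selfbutter (e n) x)) \<longlonglongrightarrow> h y"
    using assms unfolding sums_def h_def by (intro tendsto_intros) simp_all
  moreover have "h (\<Sum>n<N. selfbutter (e n) x) = (\<Sum>n<N. (cmod (cinner (e n) x))^2)" for N
    unfolding h_def Re_cinner_polarization[symmetric] cinner_sum_right Re_sum Re_cinner_selfbutter ..
  ultimately show ?thesis
    unfolding summable_def sums_def by auto
qed

text \<open>The witnesses \<open>\<sigma>, \<gamma>, v\<close> record how \<open>y'\<close> arises from \<open>y\<close> and the consumed input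
  \<open>v\<close> (or \<open>v = 0\<close>); a residual shorter than \<open>1/2\<close> is never cut, so the counter never stalls twice
  in a row.\<close>

definition tail_step :: "real \<Rightarrow> (nat \<Rightarrow> 'a::complex_inner) \<Rightarrow> 'a \<Rightarrow> nat \<Rightarrow> 'a \<Rightarrow> 'a \<Rightarrow> nat \<Rightarrow> bool" where
  "tail_step l e y m z y' m' \<longleftrightarrow>
    (norm z)^2 = 1 - l \<and> (norm y')^2 < 1 \<and>
    (m' = m \<longrightarrow> (norm y')^2 < 1/2) \<and> ((norm y)^2 < 1/2 \<longrightarrow> m' = Suc m) \<and>
    (\<exists>\<sigma> \<gamma> v. y' = \<sigma> *\<^sub>R y + \<gamma> *\<^sub>R v \<and> \<sigma>^2 + \<gamma>^2 \<le> 1 \<and> \<sigma>^2 \<le> 1 - l \<and>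
      (\<forall>x. selfbutter z x + selfbutter y' x = selfbutter y x + selfbutter v x) \<and>
      (m' = Suc m \<and> (v = e m \<or> v = - e m) \<or> m' = m \<and> v = 0))"

lemma tail_stepD:
  assumes "tail_step l e y m z y' m'"
  shows "(norm z)^2 = 1 - l" "(norm y')^2 < 1" "m' = m \<Longrightarrow> (norm y')^2 < 1/2"
    "(norm y)^2 < 1/2 \<Longrightarrow> m' = Suc m" "m' = m \<or> m' = Suc m"
  using assms unfolding tail_step_def by blast+

lemma tail_step_split:
  assumes y: "(norm y)^2 < 1" "1 - l \<le> (norm y)^2" and l: "0 \<le> l" "l < 1/2"
  shows "\<exists>z y'. tail_step l e y m z y' m"
proof -
  define q where "q = (1 - l) / (norm y)^2"
  have "0 < (norm y)^2"
    using y l by linarith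
  then have q: "1 - l \<le> q" "q \<le> 1" and q_y: "q * (norm y)^2 = 1 - l"
    using y l divide_left_mono[of "(norm y)^2" 1 "1 - l"] by (simp_all add: q_def)
  then have "0 \<le> q"
    using l by linarith
  then have "(norm (sqrt q *\<^sub>R y))^2 = 1 - l" "(norm (sqrt (1 - q) *\<^sub>R y))^2 < 1/2"
      "\<forall>x. selfbutter (sqrt q *\<^sub>R y) x + selfbutter (sqrt (1 - q) *\<^sub>R y) x = selfbutter y x + selfbutter 0 x"
    using q q_y y l selfbutter_split[of q y] by (simp_all add: algebra_simps)
  moreover have "(sqrt (1 - q))^2 + 0^2 \<le> 1" "(sqrt (1 - q))^2 \<le> 1 - l"
    using q l by simp_all
  ultimately have "tail_step l e y m (sqrt q *\<^sub>R y) (sqrt (1 - q) *\<^sub>R y) m"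
    unfolding tail_step_def using y l
    by (intro conjI impI exI[of _ "sqrt (1 - q)"] exI[of _ 0] exI[of _ 0]) simp_all
  then show ?thesis
    by blast
qed

lemma tail_step_main:
  assumes y: "(norm y)^2 < 1 - l" and e: "norm (e m) = 1" and l: "0 \<le> l"
  shows "\<exists>z y'. tail_step l e y m z y' (Suc m)"
proof -
  obtain z y' \<sigma> \<gamma> v where z: "(norm z)^2 = 1 - l" and y': "(norm y')^2 = (norm y)^2 + l"
      and sb: "\<And>x. selfbutter z x + selfbutter y' x = selfbutter y x + selfbutter (e m) x"
      and lin: "y' = \<sigma> *\<^sub>R y + \<gamma> *\<^sub>R v" "\<sigma>^2 + \<gamma>^2 = 1" "\<sigma>^2 \<le> 1 - l" and v: "v = e m \<or> v = - e m"
    using rotation_main_step[OF y e l] by blast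
  have "selfbutter v = selfbutter (e m)"
    using v by auto
  then have "\<exists>\<sigma> \<gamma> v. y' = \<sigma> *\<^sub>R y + \<gamma> *\<^sub>R v \<and> \<sigma>^2 + \<gamma>^2 \<le> 1 \<and> \<sigma>^2 \<le> 1 - l \<and>
      (\<forall>x. selfbutter z x + selfbutter y' x = selfbutter y x + selfbutter v x) \<and> (v = e m \<or> v = - e m)"
    using lin v sb by (intro exI[of _ \<sigma>] exI[of _ \<gamma>] exI[of _ v]) auto
  then have "tail_step l e y m z y' (Suc m)"
    unfolding tail_step_def using z y' y by simp
  then show ?thesis
    by blast
qed

lemma tail_step_exists:
  assumes "(norm y)^2 < 1" and "norm (e m) = 1" and "0 \<le> l" "l < 1/2"
  shows "\<exists>z y' m'. tail_step l e y m z y' m'"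
proof (cases "1 - l \<le> (norm y)^2")
  case True
  then show ?thesis
    using tail_step_split[of y l e m] assms by blast
next
  case False
  then show ?thesis
    using tail_step_main[of y l e m] assms by (meson not_le)
qed

lemma tail_sequence_exists:
  assumes e: "\<And>i. norm (e i) = 1" and lam: "\<And>j. 0 \<le> lam j \<and> lam j < 1/2" and y: "(norm y)^2 < 1"
  shows "\<exists>Y M Z. Y 0 = y \<and> M 0 = 0 \<and> (\<forall>j. tail_step (lam j) e (Y j) (M j) (Z j) (Y (Suc j)) (M (Suc j)))"
proof -
  \<comment> \<open>A state \<open>(y, m, z)\<close> also records the output \<open>z\<close> of the step that produced it.\<close>
  define P where "P n st \<longleftrightarrow> (norm (fst st))^2 < 1 \<and> (n = 0 \<longrightarrow> fst st = y \<and> fst (snd st) = 0)"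
    for n :: nat and st :: "'a \<times> nat \<times> 'a"
  define Q where "Q n st st' \<longleftrightarrow> tail_step (lam n) e (fst st) (fst (snd st)) (snd (snd st')) (fst st') (fst (snd st'))"
    for n :: nat and st st' :: "'a \<times> nat \<times> 'a"
  have "\<exists>st. P 0 st"
    using y by (auto simp: P_def)
  moreover have "\<exists>st'. P (Suc n) st' \<and> Q n st st'" if st: "P n st" for n st
  proof -
    obtain z y' m' where "tail_step (lam n) e (fst st) (fst (snd st)) z y' m'"
      using tail_step_exists[of "fst st" e "fst (snd st)" "lam n"] st e lam unfolding P_def by blast
    then show ?thesis
      unfolding P_def Q_def by (intro exI[of _ "(y', m', z)"]) (simp add: tail_step_def)
  qed
  ultimately obtain f where f: "\<And>n. P n (f n) \<and> Q n (f n) (f (Suc n))"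
    using dependent_nat_choice[of P Q] by blast
  show ?thesis
    using f[of 0] f unfolding P_def Q_def
    by (intro exI[of _ "\<lambda>j. fst (f j)"] exI[of _ "\<lambda>j. fst (snd (f j))"] exI[of _ "\<lambda>j. snd (snd (f (Suc j)))"])
      simp
qed

lemma tail_telescope:
  assumes step: "\<And>j. tail_step (lam j) e (Y j) (M j) (Z j) (Y (Suc j)) (M (Suc j))" and M0: "M 0 = 0"
  shows "(\<Sum>j<N. selfbutter (Z j) x) + selfbutter (Y N) x = selfbutter (Y 0) x + (\<Sum>n<M N. selfbutter (e n) x)"
proof (induction N)
  case 0
  show ?case
    by (simp add: M0)
next
  case (Suc N)
  obtain v where sb: "selfbutter (Z N) x + selfbutter (Y (Suc N)) x = selfbutter (Y N) x + selfbutter v x"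
      and v: "M (Suc N) = Suc (M N) \<and> (v = e (M N) \<or> v = - e (M N)) \<or> M (Suc N) = M N \<and> v = 0"
    using step[of N] unfolding tail_step_def by blast
  have consumed: "(\<Sum>n<M (Suc N). selfbutter (e n) x) = (\<Sum>n<M N. selfbutter (e n) x) + selfbutter v x"
    using v by auto
  have "(\<Sum>j<Suc N. selfbutter (Z j) x) + selfbutter (Y (Suc N)) x
      = (\<Sum>j<N. selfbutter (Z j) x) + (selfbutter (Z N) x + selfbutter (Y (Suc N)) x)"
    by (simp add: add_ac)
  also have "\<dots> = ((\<Sum>j<N. selfbutter (Z j) x) + selfbutter (Y N) x) + selfbutter v x"
    by (simp add: sb add_ac)
  also have "\<dots> = (selfbutter (Y 0) x + (\<Sum>n<M N. selfbutter (e n) x)) + selfbutter v x"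
    by (simp only: Suc.IH)
  also have "\<dots> = selfbutter (Y 0) x + (\<Sum>n<M (Suc N). selfbutter (e n) x)"
    by (simp add: consumed add_ac)
  finally show ?case .
qed

lemma tail_residual_inner_tendsto_zero:
  assumes step: "\<And>j. tail_step (lam j) e (Y j) (M j) (Z j) (Y (Suc j)) (M (Suc j))"
    and lam: "\<And>j. 0 \<le> lam j" "\<not> summable lam"
    and e: "(\<lambda>n. selfbutter (e n) x) sums a"
  shows "(\<lambda>j. cinner (Y j) x) \<longlonglongrightarrow> 0"
proof -
  have "\<forall>j. \<exists>\<sigma> \<gamma> v. Y (Suc j) = \<sigma> *\<^sub>R Y j + \<gamma> *\<^sub>R v \<and> \<sigma>^2 + \<gamma>^2 \<le> 1 \<and> \<sigma>^2 \<le> 1 - lam j \<and>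
      (M (Suc j) = Suc (M j) \<and> (v = e (M j) \<or> v = - e (M j)) \<or> M (Suc j) = M j \<and> v = 0)"
    using step unfolding tail_step_def by blast
  then obtain S G V where SGV: "\<And>j. Y (Suc j) = S j *\<^sub>R Y j + G j *\<^sub>R V j"
      "\<And>j. (S j)^2 + (G j)^2 \<le> 1" "\<And>j. (S j)^2 \<le> 1 - lam j"
      and V: "\<And>j. M (Suc j) = Suc (M j) \<and> (V j = e (M j) \<or> V j = - e (M j)) \<or> M (Suc j) = M j \<and> V j = 0"
    by metis
  have "(\<lambda>j. (cmod (cinner (V j) x))^2)
      = (\<lambda>j. if M (Suc j) = Suc (M j) then (cmod (cinner (e (M j)) x))^2 else 0)"
  proof
    fix j
    show "(cmod (cinner (V j) x))^2 = (if M (Suc j) = Suc (M j) then (cmod (cinner (e (M j)) x))^2 else 0)"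
      using V[of j] by (auto simp: cinner_minus_left)
  qed
  moreover have "summable (\<lambda>j. if M (Suc j) = Suc (M j) then (cmod (cinner (e (M j)) x))^2 else 0)"
    using V by (intro summable_along_counter summable_cmod_cinner_sq[OF e]) auto
  ultimately have V_sq: "summable (\<lambda>j. (cmod (cinner (V j) x))^2)"
    by simp
  have rec: "cinner (Y (Suc j)) x = of_real (S j) * cinner (Y j) x + of_real (G j) * cinner (V j) x" for j
    by (simp add: SGV(1) cinner_add_left cinner_scaleR_left)
  show ?thesis
    by (rule lincomb_recursion_tendsto_zero[where \<beta> = "\<lambda>j. cinner (V j) x", OF rec SGV(2,3) V_sq lam])
qed

lemma tail_counter_at_top:
  assumes step: "\<And>j. tail_step (lam j) e (Y j) (M j) (Z j) (Y (Suc j)) (M (Suc j))"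
  shows "filterlim M at_top sequentially"
proof (rule filterlim_counter_at_top)
  show "M (Suc j) = M j \<or> M (Suc j) = Suc (M j)" for j
    by (rule tail_stepD(5)[OF step])
  show "M (Suc (Suc j)) = Suc (M (Suc j))" if "M (Suc j) = M j" for j
    using tail_stepD(3)[OF step[of j] that] by (rule tail_stepD(4)[OF step])
qed

lemma tail_residual_tendsto_zero:
  assumes step: "\<And>j. tail_step (lam j) e (Y j) (M j) (Z j) (Y (Suc j)) (M (Suc j))"
    and Y0: "(norm (Y 0))^2 < 1" and lam: "\<And>j. 0 \<le> lam j" "\<not> summable lam"
    and e: "(\<lambda>n. selfbutter (e n) x) sums a"
  shows "(\<lambda>j. selfbutter (Y j) x) \<longlonglongrightarrow> 0"
proof (rule Lim_null_comparison)
  have "(norm (Y j))^2 < 1" for j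
    using Y0 tail_stepD(2)[OF step[of "j - 1"]] by (cases j) simp_all
  then have Y_le: "norm (Y j) \<le> 1" for j
    using abs_square_less_1[of "norm (Y j)"] by simp
  show "\<forall>\<^sub>F j in sequentially. norm (selfbutter (Y j) x) \<le> cmod (cinner (Y j) x)"
    by (intro always_eventually allI norm_selfbutter_le Y_le)
  show "(\<lambda>j. cmod (cinner (Y j) x)) \<longlonglongrightarrow> 0"
    by (rule tendsto_norm_zero[OF tail_residual_inner_tendsto_zero[OF step lam e]])
qed

lemma decomp_add_residual:
  assumes e: "\<And>i. norm (e i) = 1" and lam: "\<And>j. 0 \<le> lam j \<and> lam j < 1/2" "\<not> summable lam"
    and y: "(norm y)^2 < 1" and A: "\<And>x. (\<lambda>n. selfbutter (e n) x) sums A x"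
  shows "\<exists>z. (\<forall>j. (norm (z j))^2 = 1 - lam j) \<and> (\<forall>x. (\<lambda>j. selfbutter (z j) x) sums (A x + selfbutter y x))"
proof -
  obtain Y M Z where Y0: "Y 0 = y" and M0: "M 0 = 0"
      and step: "\<And>j. tail_step (lam j) e (Y j) (M j) (Z j) (Y (Suc j)) (M (Suc j))"
    using tail_sequence_exists[where e = e and lam = lam, OF e lam(1) y] by blast
  have "(\<lambda>j. selfbutter (Z j) x) sums (A x + selfbutter y x)" for x
  proof -
    have "(\<lambda>N. \<Sum>n<M N. selfbutter (e n) x) \<longlonglongrightarrow> A x"
      using filterlim_compose[OF A[unfolded sums_def]]
        tail_counter_at_top[where lam = lam and e = e and Y = Y and M = M and Z = Z, OF step] .
    moreover have "(\<lambda>N. selfbutter (Y N) x) \<longlonglongrightarrow> 0"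
      using tail_residual_tendsto_zero[OF step _ _ lam(2) A] Y0 y lam(1) by blast
    ultimately have "(\<lambda>N. selfbutter y x + (\<Sum>n<M N. selfbutter (e n) x) - selfbutter (Y N) x)
        \<longlonglongrightarrow> selfbutter y x + A x - 0"
      by (intro tendsto_intros)
    moreover have "(\<Sum>j<N. selfbutter (Z j) x) = selfbutter y x + (\<Sum>n<M N. selfbutter (e n) x) - selfbutter (Y N) x" for N
      using tail_telescope[OF step M0, where N = N and x = x] Y0 by (simp add: eq_diff_eq)
    ultimately show ?thesis
      unfolding sums_def by (simp add: add.commute)
  qed
  moreover have "(norm (Z j))^2 = 1 - lam j" for j
    by (rule tail_stepD(1)[OF step])
  ultimately show ?thesis
    by blast
qed

section \<open>Admissibility\<close>

lemma decomp_add_finite_sum: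
  assumes e: "\<And>i. norm (e i) = 1" and lam: "\<And>j. 0 \<le> lam j \<and> lam j < 1/2" "\<not> summable lam"
    and A: "\<And>x. (\<lambda>n. selfbutter (e n) x) sums A x"
    and I: "finite I" and w: "\<And>k. k \<in> I \<Longrightarrow> (norm (w k))^2 < 1"
  shows "\<exists>z. (\<forall>j. (norm (z j))^2 = 1 - lam j)
    \<and> (\<forall>x. (\<lambda>j. selfbutter (z j) x) sums (A x + (\<Sum>k\<in>I. selfbutter (w k) x)))"
proof -
  obtain n m z1 y where head: "partial_decomp lam e n m z1 (\<lambda>x. \<Sum>k\<in>I. selfbutter (w k) x) (selfbutter y)"
      and y: "(norm y)^2 < 1"
    using absorb_finite_sum[where y = 0 and e = e and lam = lam and w = w, OF I w e lam] by simp blast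
  have e': "\<And>i. norm (e (i + m)) = 1" and lam': "\<And>j. 0 \<le> lam (j + n) \<and> lam (j + n) < 1/2"
    using e lam(1) by simp_all
  have "\<not> summable (\<lambda>j. lam (j + n))"
    using lam(2) summable_iff_shift[where f = lam and k = n] by simp
  moreover have "(\<lambda>i. selfbutter (e (i + m)) x) sums (A x - (\<Sum>i<m. selfbutter (e i) x))" for x
    using A sums_iff_shift'[where f = "\<lambda>i. selfbutter (e i) x" and n = m] by blast
  ultimately obtain z2 where z2: "\<And>j. (norm (z2 j))^2 = 1 - lam (j + n)"
      and tail: "\<And>x. (\<lambda>j. selfbutter (z2 j) x) sums (A x - (\<Sum>i<m. selfbutter (e i) x) + selfbutter y x)"
    using decomp_add_residual[where e = "\<lambda>i. e (i + m)" and lam = "\<lambda>j. lam (j + n)"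
        and A = "\<lambda>x. A x - (\<Sum>i<m. selfbutter (e i) x)", OF e' lam' _ y] by blast
  define z where "z j = (if j < n then z1 j else z2 (j - n))" for j
  have "(norm (z j))^2 = 1 - lam j" for j
    using head z2[of "j - n"] unfolding partial_decomp_def z_def by auto
  moreover have "(\<lambda>j. selfbutter (z j) x) sums (A x + (\<Sum>k\<in>I. selfbutter (w k) x))" for x
  proof -
    have "(\<Sum>j<n. selfbutter (z j) x) = (\<Sum>j<n. selfbutter (z1 j) x)"
      by (rule sum.cong) (simp_all add: z_def)
    then have total: "A x + (\<Sum>k\<in>I. selfbutter (w k) x)
        = (A x - (\<Sum>i<m. selfbutter (e i) x) + selfbutter y x) + (\<Sum>j<n. selfbutter (z j) x)"
      using head unfolding partial_decomp_def by (simp add: algebra_simps)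
    have "(\<lambda>j. selfbutter (z (j + n)) x) sums (A x - (\<Sum>i<m. selfbutter (e i) x) + selfbutter y x)"
      using tail[of x] by (simp add: z_def)
    then show ?thesis
      unfolding total using sums_iff_shift[where f = "\<lambda>j. selfbutter (z j) x" and n = n] by blast
  qed
  ultimately show ?thesis
    by blast
qed

lemma Adm_of_decomp:
  assumes z: "\<And>j. (norm (z j))^2 = \<xi> j" and pos: "\<And>j. 0 < \<xi> j" and bdd: "bounded (range \<xi>)"
    and X: "\<And>x. (\<lambda>j. selfbutter (z j) x) sums X x"
  shows "\<xi> \<in> Adm X"
proof -
  define P where "P j = selfbutter ((1 / norm (z j)) *\<^sub>R z j)" for j
  have nz: "0 < norm (z j)" for j
    using z[of j] pos[of j] by (metis norm_ge_zero order_less_le zero_less_power2)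
  then have "rank_one_proj (P j)" for j
    unfolding P_def rank_one_proj_iff by (intro exI[of _ "(1 / norm (z j)) *\<^sub>R z j"]) simp
  moreover have "\<xi> j *\<^sub>R P j x = selfbutter (z j) x" for j x
    using nz[of j] by (simp add: P_def selfbutter_scaleR flip: z) (simp add: power_divide)
  ultimately show ?thesis
    unfolding Adm_def using bdd pos X by (auto intro!: exI[of _ P] less_imp_le)
qed

theorem lemma3p7:
  fixes E :: "nat \<Rightarrow> 'a::chilbert_space \<Rightarrow> 'a" and A :: "'a \<Rightarrow> 'a"
    and lam :: "nat \<Rightarrow> real" and K :: nat and s :: "nat \<Rightarrow> real"
    and F :: "nat \<Rightarrow> 'a \<Rightarrow> 'a"
  assumes E_proj: "\<forall>j. rank_one_proj (E j)"
    and A_def: "\<forall>x. (\<lambda>j. E j x) sums A x"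
    and lam_bounds: "\<forall>j. 0 \<le> lam j \<and> lam j < 1/2"
    and lam_div: "\<not> summable lam"
    and K_pos: "1 \<le> K"
    and s_bounds: "\<forall>k\<in>{1..K}. 0 \<le> s k \<and> s k < 1"
    and F_proj: "\<forall>k\<in>{1..K}. rank_one_proj (F k)"
  shows "(\<lambda>j. 1 - lam j) \<in> Adm (\<lambda>x. A x + (\<Sum>k=1..K. s k *\<^sub>R F k x))"
proof -
  have lam: "\<And>j. 0 \<le> lam j \<and> lam j < 1/2"
    using lam_bounds by blast
  obtain e where e: "\<And>j. norm (e j) = 1" "\<And>j. E j = selfbutter (e j)"
    using E_proj unfolding rank_one_proj_iff by metis
  obtain f where f: "\<And>k. k \<in> {1..K} \<Longrightarrow> norm (f k) = 1 \<and> F k = selfbutter (f k)"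
    using F_proj unfolding rank_one_proj_iff by metis
  define w where "w k = sqrt (s k) *\<^sub>R f k" for k
  have w: "(norm (w k))^2 < 1" "selfbutter (w k) x = s k *\<^sub>R F k x" if "k \<in> {1..K}" for k x
    using f[OF that] s_bounds that by (simp_all add: w_def selfbutter_scaleR power_mult_distrib)
  have "(\<lambda>n. selfbutter (e n) x) sums A x" for x
    using A_def by (simp add: e(2)[symmetric])
  then obtain z where z: "\<And>j. (norm (z j))^2 = 1 - lam j"
      and z_sums: "\<And>x. (\<lambda>j. selfbutter (z j) x) sums (A x + (\<Sum>k=1..K. selfbutter (w k) x))"
    using decomp_add_finite_sum[where e = e and lam = lam and I = "{1..K}" and w = w, OF e(1) lam lam_div] w(1)
    by blast
  show ?thesis
  proof (rule Adm_of_decomp[OF z])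
    show "0 < 1 - lam j" for j
      using lam[of j] by linarith
    have "norm (1 - lam j) \<le> 1" for j
      using lam[of j] by simp
    then show "bounded (range (\<lambda>j. 1 - lam j))"
      unfolding bounded_iff by blast
    show "(\<lambda>j. selfbutter (z j) x) sums (A x + (\<Sum>k=1..K. s k *\<^sub>R F k x))" for x
      using z_sums[of x] w(2) by simp
  qed
qed

end
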